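(* The categories $(\mathcal I_D)_{D}$, where $D$ ranges over all subsemigroups of $(\mathbb N_0,+)$, are pairwise distinct: if $D_1,D_2$ are subsemigroups of $(\mathbb N_0,+)$ with $\mathcal I_{D_1}=\mathcal I_{D_2}$, then $D_1=D_2$.
   Context: A (two-colored) partition $p$ consists of two finite totally ordered sets $U$ (upper row) and $L$ (lower row), a decomposition of the disjoint union $U\sqcup L$ (the points) into non-empty pairwise disjoint blocks, and a coloring of every point by $\circ$ or $\bullet$. A pair partition is one all of whose blocks have two points. Cyclic order and color sum: on the points of $p$ consider the cyclic order obtained by traversing the lower row from left to right, then the upper row from right to left, then returning to the leftmost lower point. For points $\alpha,\beta$, $]\alpha,\beta[$ denotes the points strictly after $\alpha$ and strictly before $\beta$ in this cyclic order, and $]\alpha,\beta]:=]\alpha,\beta[\cup\{\beta\}$ if $\alpha\neq\beta$, $]\alpha,\alpha]:=\emptyset$. The normalized color of a lower point is its color, that of an upper point the opposite color. For a set $S$ of points, $\sigma_p(S)$ is the number of normalized-$\circ$ points in $S$ minus the number of normalized-$\bullet$ points in $S$. Two distinct blocks $B,B'$ cross if there are $\alpha,\beta\in B$, $\gamma,\delta\in B'$ occurring in the cyclic order as $\alpha,\gamma,\beta,\delta$. $\mathcal P^{\circ\bullet}_{2,\mathrm{nb}}$: pair partitions each block of which contains one point of each normalized color. $\mathcal S_0$: those $p\in\mathcal P^{\circ\bullet}_{2,\mathrm{nb}}$ with $\sigma_p(]\alpha,\beta[)=0$ for every block $\{\alpha,\beta\}$. For $p\in\mathcal S_0$ and points $\alpha,\beta$: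 $\delta_p(\alpha,\beta)=\sigma_p(]\alpha,\beta[)$ if they have different normalized colors, $\sigma_p(]\alpha,\beta])$ otherwise; for blocks $B,B'$, $d_p(B,B'):=|\delta_p(\alpha,\alpha')|$ for any $\alpha\in B,\alpha'\in B'$ (independent of the choice). A subsemigroup of $(\mathbb N_0,+)$ is a (possibly empty) subset closed under addition. $\mathcal I_D$ is the set of all $p\in\mathcal S_0$ such that $d_p(B,B')\notin D$ for all pairs of crossing blocks $B,B'$ of $p$. *)

theory Defs
  imports Main
begin

text \<open>Points of a two-colored partition: the upper row is {Up 0, ..., Up (k-1)},
  the lower row is {Lo 0, ..., Lo (l-1)}, each ordered left to right by the index.
  (Every finite totally ordered set is order-isomorphic to such an initial segment.)\<close>

datatype pt = Up nat | Lo nat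

datatype colour = White | Black

record part =
  nup :: nat
  nlo :: nat
  col :: "pt \<Rightarrow> colour"
  blocks :: "pt set set"

definition points :: "part \<Rightarrow> pt set" where
  "points p = Up ` {..<nup p} \<union> Lo ` {..<nlo p}"

definition is_partition :: "part \<Rightarrow> bool" where
  "is_partition p \<longleftrightarrow>
     (\<forall>B\<in>blocks p. B \<noteq> {} \<and> B \<subseteq> points p) \<and>
     (\<forall>B\<in>blocks p. \<forall>B'\<in>blocks p. B \<noteq> B' \<longrightarrow> B \<inter> B' = {}) \<and>
     \<Union>(blocks p) = points p"

text \<open>Position in the cyclic order: lower row left to right, then upper row right to left.\<close>
fun pos :: "part \<Rightarrow> pt \<Rightarrow> nat" where
  "pos p (Lo j) = j"
| "pos p (Up i) = nlo p + (nup p - 1 - i)"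

definition cdist :: "part \<Rightarrow> pt \<Rightarrow> pt \<Rightarrow> nat" where
  "cdist p a b = (pos p b + (nup p + nlo p) - pos p a) mod (nup p + nlo p)"

definition open_int :: "part \<Rightarrow> pt \<Rightarrow> pt \<Rightarrow> pt set" where
  "open_int p a b = {c \<in> points p. 0 < cdist p a c \<and> cdist p a c < cdist p a b}"

definition halfopen_int :: "part \<Rightarrow> pt \<Rightarrow> pt \<Rightarrow> pt set" where
  "halfopen_int p a b = (if a = b then {} else open_int p a b \<union> {b})"

fun flip :: "colour \<Rightarrow> colour" where
  "flip White = Black" | "flip Black = White"

fun ncol :: "part \<Rightarrow> pt \<Rightarrow> colour" where
  "ncol p (Lo j) = col p (Lo j)"
| "ncol p (Up i) = flip (col p (Up i))"

definition csum :: "part \<Rightarrow> pt set \<Rightarrow> int" where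
  "csum p S = int (card {x\<in>S. ncol p x = White}) - int (card {x\<in>S. ncol p x = Black})"

definition crossing :: "part \<Rightarrow> pt set \<Rightarrow> pt set \<Rightarrow> bool" where
  "crossing p B B' \<longleftrightarrow> B \<noteq> B' \<and>
     (\<exists>a\<in>B. \<exists>b\<in>B. \<exists>c\<in>B'. \<exists>d\<in>B'.
        0 < cdist p a c \<and> cdist p a c < cdist p a b \<and> cdist p a b < cdist p a d)"

definition P2nb :: "part set" where
  "P2nb = {p. is_partition p \<and>
     (\<forall>B\<in>blocks p. \<exists>x y. B = {x, y} \<and> ncol p x = White \<and> ncol p y = Black)}"

definition S0 :: "part set" where
  "S0 = {p \<in> P2nb. \<forall>B\<in>blocks p. \<forall>a b. B = {a, b} \<and> a \<noteq> b \<longrightarrow> csum p (open_int p a b) = 0}"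

definition delta :: "part \<Rightarrow> pt \<Rightarrow> pt \<Rightarrow> int" where
  "delta p a b = (if ncol p a \<noteq> ncol p b then csum p (open_int p a b)
                  else csum p (halfopen_int p a b))"

definition dblk :: "part \<Rightarrow> pt set \<Rightarrow> pt set \<Rightarrow> nat" where
  "dblk p B B' = nat \<bar>delta p (SOME a. a \<in> B) (SOME a'. a' \<in> B')\<bar>"

definition subsemigroup :: "nat set \<Rightarrow> bool" where
  "subsemigroup D \<longleftrightarrow> (\<forall>x\<in>D. \<forall>y\<in>D. x + y \<in> D)"

definition I_D :: "nat set \<Rightarrow> part set" where
  "I_D D = {p \<in> S0. \<forall>B\<in>blocks p. \<forall>B'\<in>blocks p. crossing p B B' \<longrightarrow> dblk p B B' \<notin> D}"

end

theory Submission
  imports Defs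
begin

(*
  For a subsemigroup D and d \<notin> D we build a partition in I_D D with two crossing blocks at
  distance d; it lies outside I_D D' whenever d \<in> D', so I_D D \<subseteq> I_D D' forces D' \<subseteq> D.

  All witnesses have only lower points, and their colouring is read as a lattice path (white =
  up step). Then delta of two points is the difference of the levels of their steps, so
  pairing steps of equal level and opposite direction gives an element of S0. For d > 0 take the
  path with two peaks of height m = d + 1 and pair the four steps at each level k < m inside each
  peak if k \<in> {0} \<union> D, across the peaks otherwise. Two blocks then cross only if a level in
  {0} \<union> D lies below one outside it, and their distance is not in D because D is closed under
  addition; the levels 0 and d give the required crossing. For d = 0, six alternately coloured
  points paired with their antipodes suffice.
*)

definition chords_cross :: "nat \<Rightarrow> nat \<Rightarrow> nat \<Rightarrow> nat \<Rightarrow> bool" where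
  "chords_cross a b x y \<longleftrightarrow> x \<notin> {a, b} \<and> y \<notin> {a, b} \<and>
     (min a b < x \<and> x < max a b) \<noteq> (min a b < y \<and> y < max a b)"

lemma chords_cross_commute:
  "chords_cross a b x y \<longleftrightarrow> chords_cross b a x y"
  "chords_cross a b x y \<longleftrightarrow> chords_cross a b y x"
  by (auto simp: chords_cross_def)

lemma chords_cross_cong:
  "{a, b} = {a', b'} \<Longrightarrow> {x, y} = {x', y'} \<Longrightarrow> chords_cross a b x y = chords_cross a' b' x' y'"
  by (auto simp: doubleton_eq_iff chords_cross_commute)

lemma chords_cross_ordered:
  "a < b \<Longrightarrow> x < y \<Longrightarrow>
    chords_cross a b x y \<longleftrightarrow> a < x \<and> x < b \<and> b < y \<or> x < a \<and> a < y \<and> y < b"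
  by (auto simp: chords_cross_def)

lemma cdist_one_row:
  assumes "nup p = 0" "a < nlo p" "b < nlo p"
  shows "cdist p (Lo a) (Lo b) = (if a \<le> b then b - a else nlo p + b - a)"
  using assms by (auto simp: cdist_def mod_if)

lemma chords_cross_if_cyclic_order:
  assumes p: "nup p = 0" and lt: "a < nlo p" "b < nlo p" "x < nlo p" "y < nlo p"
    and order: "0 < cdist p (Lo a) (Lo x)" "cdist p (Lo a) (Lo x) < cdist p (Lo a) (Lo b)"
      "cdist p (Lo a) (Lo b) < cdist p (Lo a) (Lo y)"
  shows "chords_cross a b x y"
proof -
  note d = cdist_one_row[OF p lt(1)]
  show ?thesis
  proof (cases "a < b")
    case True
    then have "a < x \<and> x < b" "y < a \<or> b < y"
      using order lt d[of x] d[of b] d[of y] by (auto split: if_splits)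
    with True show ?thesis by (auto simp: chords_cross_def)
  next
    case False
    then have "b < a" using order d[of b] lt by (auto split: if_splits)
    then have "b < y \<and> y < a" "x < b \<or> a < x"
      using order lt d[of x] d[of b] d[of y] by (auto split: if_splits)
    with \<open>b < a\<close> show ?thesis by (auto simp: chords_cross_def)
  qed
qed

lemma crossing_one_row_if_interleaved:
  assumes p: "nup p = 0" and "a < x" "x < b" "y < a \<or> b < y" "b < nlo p" "y < nlo p"
  shows "crossing p {Lo a, Lo b} {Lo x, Lo y}"
proof -
  have "Lo x \<notin> {Lo a, Lo b}" using assms by simp
  then have "{Lo a, Lo b} \<noteq> {Lo x, Lo y}" by blast
  moreover have "0 < cdist p (Lo a) (Lo x)" "cdist p (Lo a) (Lo x) < cdist p (Lo a) (Lo b)"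
    "cdist p (Lo a) (Lo b) < cdist p (Lo a) (Lo y)"
    using assms by (auto simp: cdist_one_row[OF p])
  ultimately show ?thesis unfolding crossing_def by blast
qed

lemma crossing_one_row:
  assumes p: "nup p = 0" and lt: "a < nlo p" "b < nlo p" "x < nlo p" "y < nlo p"
  shows "crossing p {Lo a, Lo b} {Lo x, Lo y} \<longleftrightarrow> chords_cross a b x y"
proof
  assume "crossing p {Lo a, Lo b} {Lo x, Lo y}"
  then obtain \<alpha> \<beta> \<gamma> \<delta> where in_blocks: "\<alpha> \<in> {a, b}" "\<beta> \<in> {a, b}" "\<gamma> \<in> {x, y}" "\<delta> \<in> {x, y}"
    and order: "0 < cdist p (Lo \<alpha>) (Lo \<gamma>)" "cdist p (Lo \<alpha>) (Lo \<gamma>) < cdist p (Lo \<alpha>) (Lo \<beta>)"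
      "cdist p (Lo \<alpha>) (Lo \<beta>) < cdist p (Lo \<alpha>) (Lo \<delta>)"
    unfolding crossing_def by blast
  then have "\<alpha> \<noteq> \<beta>" "\<gamma> \<noteq> \<delta>" by (auto simp: cdist_def)
  then have "{\<alpha>, \<beta>} = {a, b}" "{\<gamma>, \<delta>} = {x, y}" using in_blocks by auto
  moreover have "chords_cross \<alpha> \<beta> \<gamma> \<delta>"
    by (rule chords_cross_if_cyclic_order[OF p _ _ _ _ order]) (use in_blocks lt in auto)
  ultimately show "chords_cross a b x y"
    by (auto simp: doubleton_eq_iff chords_cross_commute)
next
  assume "chords_cross a b x y"
  then consider "a < x \<and> x < b \<and> (y < a \<or> b < y)" | "b < x \<and> x < a \<and> (y < b \<or> a < y)"
    | "a < y \<and> y < b \<and> (x < a \<or> b < x)" | "b < y \<and> y < a \<and> (x < b \<or> a < x)"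
    unfolding chords_cross_def min_def max_def by (auto split: if_splits) (meson linorder_neqE_nat)+
  then show "crossing p {Lo a, Lo b} {Lo x, Lo y}"
  proof cases
    case 1
    then show ?thesis using crossing_one_row_if_interleaved[OF p, of a x b y] lt by simp
  next
    case 2
    then show ?thesis using crossing_one_row_if_interleaved[OF p, of b x a y] lt
      by (simp add: insert_commute)
  next
    case 3
    then show ?thesis using crossing_one_row_if_interleaved[OF p, of a y b x] lt
      by (simp add: insert_commute)
  next
    case 4
    then show ?thesis using crossing_one_row_if_interleaved[OF p, of b y a x] lt
      by (simp add: insert_commute)
  qed
qed

definition cyclic_between :: "nat \<Rightarrow> nat \<Rightarrow> nat \<Rightarrow> nat set" where
  "cyclic_between n a b = (if a \<le> b then {a<..<b} else {a<..<n} \<union> {..<b})"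

lemma finite_cyclic_between [simp]: "finite (cyclic_between n a b)"
  by (simp add: cyclic_between_def)

lemma open_int_one_row:
  assumes p: "nup p = 0" and lt: "a < nlo p" "b < nlo p"
  shows "open_int p (Lo a) (Lo b) = Lo ` cyclic_between (nlo p) a b"
  using lt by (auto simp: open_int_def points_def p cdist_one_row[OF p] cyclic_between_def
      image_iff split: if_splits)

lemma csum_eq_sum:
  "finite S \<Longrightarrow> csum p S = (\<Sum>x\<in>S. if ncol p x = White then 1 else -1)"
  unfolding csum_def card_eq_sum of_nat_sum sum.inter_filter sum_subtractf[symmetric]
  by (rule sum.cong) (auto intro: colour.exhaust)

definition colour_sign :: "(nat \<Rightarrow> bool) \<Rightarrow> nat \<Rightarrow> int" where
  "colour_sign c j = (if c j then 1 else -1)"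

definition height :: "(nat \<Rightarrow> bool) \<Rightarrow> nat \<Rightarrow> int" where
  "height c i = (\<Sum>j<i. colour_sign c j)"

definition level :: "(nat \<Rightarrow> bool) \<Rightarrow> nat \<Rightarrow> int" where
  "level c i = min (height c i) (height c (Suc i))"

lemma height_Suc: "height c (Suc i) = height c i + colour_sign c i"
  by (simp add: height_def)

lemma height_diff: "a \<le> b \<Longrightarrow> height c b - height c a = (\<Sum>j\<in>{a..<b}. colour_sign c j)"
  unfolding height_def
  using sum.atLeastLessThan_concat[of 0 a b "colour_sign c"] by (simp add: atLeast0LessThan)

lemma sum_cyclic_between:
  assumes "height c n = 0" "a < n" "b < n" "a \<noteq> b"
  shows "(\<Sum>j\<in>cyclic_between n a b. colour_sign c j) = height c b - height c (Suc a)"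
proof (cases "a < b")
  case True
  then have "cyclic_between n a b = {Suc a..<b}" by (auto simp: cyclic_between_def)
  then show ?thesis using True height_diff[of "Suc a" b c] by simp
next
  case False
  then have "cyclic_between n a b = {Suc a..<n} \<union> {..<b}" and "b < a"
    using assms by (auto simp: cyclic_between_def)
  moreover have "{Suc a..<n} \<inter> {..<b} = {}" using \<open>b < a\<close> by auto
  ultimately show ?thesis
    using assms height_diff[of "Suc a" n c] by (simp add: sum.union_disjoint height_def)
qed

definition lower_part :: "nat \<Rightarrow> (nat \<Rightarrow> bool) \<Rightarrow> (nat \<Rightarrow> nat) \<Rightarrow> part" where
  "lower_part n c f = \<lparr>nup = 0, nlo = n,
     col = (\<lambda>x. case x of Lo j \<Rightarrow> if c j then White else Black | Up _ \<Rightarrow> White),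
     blocks = (\<lambda>i. {Lo i, Lo (f i)}) ` {..<n}\<rparr>"

lemma lower_part_simps [simp]:
  "nup (lower_part n c f) = 0" "nlo (lower_part n c f) = n"
  "col (lower_part n c f) (Lo j) = (if c j then White else Black)"
  "blocks (lower_part n c f) = (\<lambda>i. {Lo i, Lo (f i)}) ` {..<n}"
  by (simp_all add: lower_part_def)

lemma points_lower_part: "points (lower_part n c f) = Lo ` {..<n}"
  by (simp add: points_def)

lemma csum_lower_part:
  "finite A \<Longrightarrow> csum (lower_part n c f) (Lo ` A) = (\<Sum>j\<in>A. colour_sign c j)"
  by (auto simp: csum_eq_sum sum.reindex inj_on_def colour_sign_def intro!: sum.cong)

lemma delta_lower_part:
  assumes "height c n = 0" "a < n" "b < n"
  shows "delta (lower_part n c f) (Lo a) (Lo b) = level c b - level c a"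
proof (cases "a = b")
  case True
  then show ?thesis by (simp add: delta_def halfopen_int_def csum_def)
next
  case False
  let ?p = "lower_part n c f"
  have "csum ?p (open_int ?p (Lo a) (Lo b)) = height c b - height c (Suc a)"
    using assms False by (simp add: open_int_one_row csum_lower_part sum_cyclic_between)
  moreover have "csum ?p (halfopen_int ?p (Lo a) (Lo b)) = height c (Suc b) - height c (Suc a)"
  proof -
    have "b \<notin> cyclic_between n a b" by (auto simp: cyclic_between_def)
    have "halfopen_int ?p (Lo a) (Lo b) = Lo ` insert b (cyclic_between n a b)"
      using assms False by (simp add: halfopen_int_def open_int_one_row)
    then have "csum ?p (halfopen_int ?p (Lo a) (Lo b))
        = colour_sign c b + (\<Sum>j\<in>cyclic_between n a b. colour_sign c j)"
      by (simp only: csum_lower_part finite_insert finite_cyclic_between)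
        (simp add: \<open>b \<notin> cyclic_between n a b\<close>)
    then show ?thesis using assms False by (simp add: sum_cyclic_between height_Suc)
  qed
  ultimately show ?thesis
    by (simp add: delta_def level_def height_Suc colour_sign_def)
qed

definition level_pairing :: "nat \<Rightarrow> (nat \<Rightarrow> bool) \<Rightarrow> (nat \<Rightarrow> nat) \<Rightarrow> bool" where
  "level_pairing n c f \<longleftrightarrow> height c n = 0 \<and>
     (\<forall>i<n. f i < n \<and> f (f i) = i \<and> c (f i) \<noteq> c i \<and> level c (f i) = level c i)"

lemma level_pairingD:
  assumes "level_pairing n c f"
  shows "height c n = 0"
    and "i < n \<Longrightarrow> f i < n" "i < n \<Longrightarrow> f (f i) = i" "i < n \<Longrightarrow> c (f i) \<noteq> c i"
    and "i < n \<Longrightarrow> level c (f i) = level c i"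
  using assms by (simp_all add: level_pairing_def)

lemma lower_part_in_P2nb:
  assumes pairing: "level_pairing n c f"
  shows "lower_part n c f \<in> P2nb"
proof -
  let ?p = "lower_part n c f"
  have "\<exists>x y. {Lo i, Lo (f i)} = {x, y} \<and> ncol ?p x = White \<and> ncol ?p y = Black"
    if "i < n" for i
  proof -
    have "c (f i) \<noteq> c i" using level_pairingD(4)[OF pairing that] .
    then show ?thesis
    proof (cases "c i")
      case True
      with \<open>c (f i) \<noteq> c i\<close> show ?thesis by (intro exI[of _ "Lo i"] exI[of _ "Lo (f i)"]) simp
    next
      case False
      with \<open>c (f i) \<noteq> c i\<close> show ?thesis
        by (intro exI[of _ "Lo (f i)"] exI[of _ "Lo i"]) (simp add: insert_commute)
    qed
  qed
  moreover have "is_partition ?p"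
  proof -
    have "{Lo i, Lo (f i)} \<inter> {Lo j, Lo (f j)} = {}"
      if "i < n" "j < n" "{Lo i, Lo (f i)} \<noteq> {Lo j, Lo (f j)}" for i j
    proof -
      have "f (f i) = i" "f (f j) = j" using level_pairingD(3)[OF pairing] that by auto
      then show ?thesis using that by auto
    qed
    moreover have "\<Union> (blocks ?p) = points ?p"
      using level_pairingD(2)[OF pairing] by (auto simp: points_lower_part)
    ultimately show ?thesis by (auto simp: is_partition_def)
  qed
  ultimately show ?thesis by (auto simp: P2nb_def)
qed

lemma lower_part_in_S0:
  assumes pairing: "level_pairing n c f"
  shows "lower_part n c f \<in> S0"
proof -
  let ?p = "lower_part n c f"
  have balanced: "csum ?p (open_int ?p (Lo u) (Lo v)) = 0"
    if "u < n" "v < n" "c u \<noteq> c v" "level c u = level c v" for u v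
  proof -
    have "delta ?p (Lo u) (Lo v) = 0"
      using level_pairingD(1)[OF pairing] that by (simp add: delta_lower_part)
    then show ?thesis using that by (simp add: delta_def split: if_splits)
  qed
  have "csum ?p (open_int ?p a b) = 0" if "i < n" "{Lo i, Lo (f i)} = {a, b}" for i a b
    using that balanced[of i "f i"] balanced[of "f i" i] level_pairingD(2,4,5)[OF pairing that(1)]
    by (auto simp: doubleton_eq_iff)
  then show ?thesis using lower_part_in_P2nb[OF pairing] by (auto simp: S0_def)
qed

lemma dblk_lower_part:
  assumes pairing: "level_pairing n c f" and "i < n" "j < n"
  shows "dblk (lower_part n c f) {Lo i, Lo (f i)} {Lo j, Lo (f j)} = nat \<bar>level c j - level c i\<bar>"
proof -
  have "(SOME a. a \<in> {Lo i, Lo (f i)}) \<in> {Lo i, Lo (f i)}" "(SOME a. a \<in> {Lo j, Lo (f j)}) \<in> {Lo j, Lo (f j)}"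
    by (rule someI_ex, blast)+
  then obtain x y where "x \<in> {i, f i}" "(SOME a. a \<in> {Lo i, Lo (f i)}) = Lo x"
    and "y \<in> {j, f j}" "(SOME a. a \<in> {Lo j, Lo (f j)}) = Lo y"
    by blast
  moreover have "x < n" "level c x = level c i" "y < n" "level c y = level c j"
    using calculation assms level_pairingD[OF pairing] by auto
  ultimately show ?thesis
    using level_pairingD(1)[OF pairing] by (simp add: dblk_def delta_lower_part)
qed

lemma crossing_lower_part:
  assumes pairing: "level_pairing n c f" and "i < n" "j < n"
  shows "crossing (lower_part n c f) {Lo i, Lo (f i)} {Lo j, Lo (f j)} \<longleftrightarrow> chords_cross i (f i) j (f j)"
  using assms level_pairingD(2)[OF pairing] by (intro crossing_one_row) auto

lemma lower_part_in_I_D: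
  assumes pairing: "level_pairing n c f"
    and no_D: "\<And>i j. i < n \<Longrightarrow> j < n \<Longrightarrow> chords_cross i (f i) j (f j) \<Longrightarrow>
      nat \<bar>level c j - level c i\<bar> \<notin> D"
  shows "lower_part n c f \<in> I_D D"
  using lower_part_in_S0[OF pairing] no_D
  by (auto simp: I_D_def crossing_lower_part[OF pairing] dblk_lower_part[OF pairing])

definition crossing_at :: "part \<Rightarrow> nat \<Rightarrow> bool" where
  "crossing_at p d \<longleftrightarrow> (\<exists>B\<in>blocks p. \<exists>B'\<in>blocks p. crossing p B B' \<and> dblk p B B' = d)"

lemma not_in_I_D_if_crossing_at: "crossing_at p d \<Longrightarrow> d \<in> D \<Longrightarrow> p \<notin> I_D D"
  by (auto simp: crossing_at_def I_D_def)

lemma lower_part_crossing_at: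
  assumes "level_pairing n c f" "i < n" "j < n" "chords_cross i (f i) j (f j)"
  shows "crossing_at (lower_part n c f) (nat \<bar>level c j - level c i\<bar>)"
  using assms by (auto simp: crossing_at_def crossing_lower_part dblk_lower_part)

definition two_peaks :: "nat \<Rightarrow> nat \<Rightarrow> bool" where
  "two_peaks m i \<longleftrightarrow> i < m \<or> (2*m \<le> i \<and> i < 3*m)"

definition peak_level :: "nat \<Rightarrow> nat \<Rightarrow> nat" where
  "peak_level m i = (if i < m then i else if i < 2*m then 2*m-1-i else if i < 3*m then i-2*m else 4*m-1-i)"

definition peak_pairing :: "nat \<Rightarrow> (nat \<Rightarrow> bool) \<Rightarrow> nat \<Rightarrow> nat" where
  "peak_pairing m T i =
     (if T (peak_level m i) then (if i < 2*m then 2*m-1-i else 6*m-1-i) else 4*m-1-i)"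

lemma height_two_peaks:
  "i \<le> 4*m \<Longrightarrow> height (two_peaks m) i =
     int (if i \<le> m then i else if i \<le> 2*m then 2*m-i else if i \<le> 3*m then i-2*m else 4*m-i)"
proof (induction i)
  case 0
  then show ?case by (simp add: height_def)
next
  case (Suc i)
  then show ?case by (auto simp: height_Suc colour_sign_def two_peaks_def)
qed

lemma level_two_peaks: "i < 4*m \<Longrightarrow> level (two_peaks m) i = int (peak_level m i)"
  using height_two_peaks[of i m] height_two_peaks[of "Suc i" m]
  by (auto simp: level_def peak_level_def)

lemma peak_level_less: "i < 4*m \<Longrightarrow> peak_level m i < m"
  by (auto simp: peak_level_def)

lemma peak_reflections:
  assumes "i < 4*m"
  shows "i < 2*m \<Longrightarrow> peak_level m (2*m-1-i) = peak_level m i \<and> two_peaks m (2*m-1-i) \<noteq> two_peaks m i"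
    and "2*m \<le> i \<Longrightarrow> peak_level m (6*m-1-i) = peak_level m i \<and> two_peaks m (6*m-1-i) \<noteq> two_peaks m i"
    and "peak_level m (4*m-1-i) = peak_level m i \<and> two_peaks m (4*m-1-i) \<noteq> two_peaks m i"
  using assms by (auto simp: peak_level_def two_peaks_def)

lemma level_pairing_peak_pairing:
  shows "level_pairing (4*m) (two_peaks m) (peak_pairing m T)"
proof -
  have "peak_pairing m T i < 4*m \<and> peak_pairing m T (peak_pairing m T i) = i
      \<and> two_peaks m (peak_pairing m T i) \<noteq> two_peaks m i
      \<and> peak_level m (peak_pairing m T i) = peak_level m i" if "i < 4*m" for i
    using peak_reflections[OF that] that by (auto simp: peak_pairing_def)
  moreover have "height (two_peaks m) (4*m) = 0" using height_two_peaks[of "4*m" m] by simp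
  ultimately show ?thesis
    by (auto simp: level_pairing_def level_two_peaks)
qed

definition peak_chords :: "nat \<Rightarrow> (nat \<Rightarrow> bool) \<Rightarrow> nat \<Rightarrow> (nat \<times> nat) set" where
  "peak_chords m T k =
     (if T k then {(k, 2*m-1-k), (2*m+k, 4*m-1-k)} else {(k, 4*m-1-k), (2*m-1-k, 2*m+k)})"

lemma peak_pairing_chord:
  "i < 4*m \<Longrightarrow> \<exists>(a, b)\<in>peak_chords m T (peak_level m i). {i, peak_pairing m T i} = {a, b}"
  by (auto simp: peak_chords_def peak_pairing_def peak_level_def)

lemma peak_chords_cross:
  assumes "k < m" "k' < m" "(a, b) \<in> peak_chords m T k" "(x, y) \<in> peak_chords m T k'"
    and "chords_cross a b x y"
  shows "T k \<and> \<not> T k' \<and> k < k' \<or> T k' \<and> \<not> T k \<and> k' < k"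
proof -
  have "a < b" "x < y" using assms(1-4) by (auto simp: peak_chords_def split: if_splits)
  then have "a < x \<and> x < b \<and> b < y \<or> x < a \<and> a < y \<and> y < b"
    using assms(5) by (simp add: chords_cross_ordered)
  then show ?thesis using assms(1-4) by (auto simp: peak_chords_def split: if_splits)
qed

lemma peak_pairing_chords_cross:
  assumes "i < 4*m" "j < 4*m" "chords_cross i (peak_pairing m T i) j (peak_pairing m T j)"
  shows "T (peak_level m i) \<and> \<not> T (peak_level m j) \<and> peak_level m i < peak_level m j
    \<or> T (peak_level m j) \<and> \<not> T (peak_level m i) \<and> peak_level m j < peak_level m i"
proof -
  obtain a b where ab: "(a, b) \<in> peak_chords m T (peak_level m i)" "{i, peak_pairing m T i} = {a, b}"
    using peak_pairing_chord[OF assms(1)] by blast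
  obtain x y where xy: "(x, y) \<in> peak_chords m T (peak_level m j)" "{j, peak_pairing m T j} = {x, y}"
    using peak_pairing_chord[OF assms(2)] by blast
  have "chords_cross a b x y" using assms(3) chords_cross_cong[OF ab(2) xy(2)] by simp
  with peak_level_less[OF assms(1)] peak_level_less[OF assms(2)] ab(1) xy(1)
  show ?thesis by (rule peak_chords_cross)
qed

lemma subsemigroup_gap:
  assumes "subsemigroup D" "u \<in> insert 0 D" "u + v \<notin> insert 0 D"
  shows "v \<notin> D"
  using assms by (auto simp: subsemigroup_def)

lemma I_D_witness_positive:
  assumes D: "subsemigroup D" and "d \<notin> D" "0 < d"
  shows "\<exists>p\<in>I_D D. crossing_at p d"
proof -
  define m where "m = Suc d"
  let ?T = "\<lambda>k. k \<in> insert 0 D"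
  let ?F = "peak_pairing m ?T"
  note pairing = level_pairing_peak_pairing[of m ?T]
  have "lower_part (4*m) (two_peaks m) ?F \<in> I_D D"
  proof (rule lower_part_in_I_D[OF pairing])
    fix i j assume ij: "i < 4*m" "j < 4*m" and "chords_cross i (?F i) j (?F j)"
    then consider "?T (peak_level m i)" "\<not> ?T (peak_level m j)" "peak_level m i < peak_level m j"
      | "?T (peak_level m j)" "\<not> ?T (peak_level m i)" "peak_level m j < peak_level m i"
      using peak_pairing_chords_cross by blast
    then show "nat \<bar>level (two_peaks m) j - level (two_peaks m) i\<bar> \<notin> D"
    proof cases
      case 1
      then show ?thesis
        using ij subsemigroup_gap[OF D, of "peak_level m i" "peak_level m j - peak_level m i"]
        by (simp add: level_two_peaks nat_abs_int_diff flip: of_nat_diff)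
    next
      case 2
      then show ?thesis
        using ij subsemigroup_gap[OF D, of "peak_level m j" "peak_level m i - peak_level m j"]
        by (simp add: level_two_peaks nat_abs_int_diff flip: of_nat_diff)
    qed
  qed
  moreover have "crossing_at (lower_part (4*m) (two_peaks m) ?F) d"
  proof -
    have "?F 0 = 2*m - 1" "?F d = 4*m - 1 - d" "peak_level m 0 = 0" "peak_level m d = d"
      using assms by (simp_all add: m_def peak_pairing_def peak_level_def)
    then show ?thesis
      using lower_part_crossing_at[OF pairing, of 0 d] \<open>0 < d\<close>
      by (simp add: m_def level_two_peaks chords_cross_def)
  qed
  ultimately show ?thesis by blast
qed

lemma height_alternating: "height even i = (if even i then 0 else 1)"
  by (induction i) (simp_all add: height_Suc colour_sign_def height_def)

lemma level_alternating: "level even i = 0"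
  by (simp add: level_def height_alternating)

lemma level_pairing_alternating: "level_pairing 6 even (\<lambda>i. (i + 3) mod 6)"
proof -
  have "(i + 3) mod 6 < 6 \<and> ((i + 3) mod 6 + 3) mod 6 = i \<and> even ((i + 3) mod 6) \<noteq> even i"
    if "i < 6" for i :: nat
  proof -
    have "i = 0 \<or> i = 1 \<or> i = 2 \<or> i = 3 \<or> i = 4 \<or> i = 5" using that by auto
    then show ?thesis by auto
  qed
  then show ?thesis by (simp add: level_pairing_def level_alternating height_alternating)
qed

lemma I_D_witness_zero:
  assumes "0 \<notin> D"
  shows "\<exists>p\<in>I_D D. crossing_at p 0"
proof -
  have "lower_part 6 even (\<lambda>i. (i + 3) mod 6) \<in> I_D D"
    by (rule lower_part_in_I_D[OF level_pairing_alternating]) (simp add: level_alternating assms)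
  moreover have "crossing_at (lower_part 6 even (\<lambda>i. (i + 3) mod 6)) 0"
    using lower_part_crossing_at[OF level_pairing_alternating, of 0 1]
    by (simp add: level_alternating chords_cross_def)
  ultimately show ?thesis by blast
qed

lemma I_D_witness:
  assumes "subsemigroup D" "d \<notin> D"
  shows "\<exists>p\<in>I_D D. crossing_at p d"
  using assms I_D_witness_zero I_D_witness_positive by (cases "d = 0") auto

lemma I_D_subset_imp_superset:
  assumes "subsemigroup D1" "I_D D1 \<subseteq> I_D D2"
  shows "D2 \<subseteq> D1"
proof
  fix d assume "d \<in> D2"
  show "d \<in> D1"
  proof (rule ccontr)
    assume "d \<notin> D1"
    then obtain p where "p \<in> I_D D1" "crossing_at p d" using I_D_witness assms(1) by blast
    with \<open>d \<in> D2\<close> assms(2) show False using not_in_I_D_if_crossing_at by blast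
  qed
qed

theorem theorem1:
  assumes "subsemigroup D1" and "subsemigroup D2" and "I_D D1 = I_D D2"
  shows "D1 = D2"
  using I_D_subset_imp_superset[OF assms(1)] I_D_subset_imp_superset[OF assms(2)] assms(3)
  by blast

end
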